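(* Let $\mathcal{N}=\mathcal{N}_s\cup\mathcal{N}_b$ be a finite set of prosumers, partitioned into disjoint sets of sellers $\mathcal{N}_s$ and buyers $\mathcal{N}_b$. Each seller $n\in\mathcal{N}_s$ has a surplus energy $E_{n,\text{sur}}\ge 0$ and each buyer $m\in\mathcal{N}_b$ has a deficit energy $E_{m,\text{def}}\ge 0$. Let $0\le p_{s,g}<p_{b,g}$ be the grid's selling (feed-in) price and buying price per unit of energy. For a coalition $\mathcal{S}\subseteq\mathcal{N}$ put $$z(\mathcal{S})=\sum_{n\in\mathcal{S}\cap\mathcal{N}_s}E_{n,\text{sur}}-\sum_{m\in\mathcal{S}\cap\mathcal{N}_b}E_{m,\text{def}},\qquad \nu(\mathcal{S})=p_{s,g}\max\bigl(0,z(\mathcal{S})\bigr)-p_{b,g}\max\bigl(0,-z(\mathcal{S})\bigr).$$ Then $\nu$ is superadditive: for any two disjoint subsets $\mathcal{N}_a,\mathcal{N}_c\subseteq\mathcal{N}$, $$\nu(\mathcal{N}_a\cup\mathcal{N}_c)\ge\nu(\mathcal{N}_a)+\nu(\mathcal{N}_c).$$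
   Context: This is the value function of a canonical coalition game with transferable utility $\Gamma=\{\mathcal{N},\nu\}$ modelling peer-to-peer energy trading: within a coalition, sellers' surplus first covers buyers' deficits, any remaining surplus is sold to the grid at price $p_{s,g}$, and any remaining deficit is bought from the grid at price $p_{b,g}$. Here $E_{n,\text{sur}}=E_{n,\text{pv}}-\min(E_{n,d},E_{n,\text{pv}})$ and $E_{n,\text{def}}=E_{n,d}-\min(E_{n,d},E_{n,\text{pv}})$, where $E_{n,\text{pv}}$ is the prosumer's solar generation and $E_{n,d}$ its demand. *)

theory Defs
  imports Main "HOL.Real"
begin

definition net_energy :: "'a set \<Rightarrow> 'a set \<Rightarrow> ('a \<Rightarrow> real) \<Rightarrow> ('a \<Rightarrow> real) \<Rightarrow> 'a set \<Rightarrow> real" where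
  "net_energy Ns Nb Esur Edef S = (\<Sum>n\<in>S \<inter> Ns. Esur n) - (\<Sum>m\<in>S \<inter> Nb. Edef m)"

definition coalition_value ::
  "real \<Rightarrow> real \<Rightarrow> 'a set \<Rightarrow> 'a set \<Rightarrow> ('a \<Rightarrow> real) \<Rightarrow> ('a \<Rightarrow> real) \<Rightarrow> 'a set \<Rightarrow> real" where
  "coalition_value psg pbg Ns Nb Esur Edef S =
     (let z = net_energy Ns Nb Esur Edef S in psg * max 0 z - pbg * max 0 (- z))"

end

theory Submission
  imports Defs
begin

text \<open>The net energy of a coalition is additive over disjoint coalitions. Since
  \<open>psg \<le> pbg\<close>, the value of a coalition with net energy \<open>z\<close> is
  \<open>min (psg * z) (pbg * z)\<close>, a minimum of linear functions of \<open>z\<close> and hence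
  superadditive.\<close>

lemma net_energy_Un_disjoint:
  assumes "finite A" "finite C" "A \<inter> C = {}"
  shows "net_energy Ns Nb Esur Edef (A \<union> C)
           = net_energy Ns Nb Esur Edef A + net_energy Ns Nb Esur Edef C"
proof -
  have "(\<Sum>n\<in>(A \<union> C) \<inter> X. f n) = (\<Sum>n\<in>A \<inter> X. f n) + (\<Sum>n\<in>C \<inter> X. f n)"
    for X and f :: "'a \<Rightarrow> real"
    unfolding Int_Un_distrib2 by (rule sum.union_disjoint) (use assms in auto)
  then show ?thesis
    unfolding net_energy_def by simp
qed

lemma coalition_value_eq_min:
  assumes "psg \<le> pbg"
  shows "coalition_value psg pbg Ns Nb Esur Edef S
           = min (psg * net_energy Ns Nb Esur Edef S) (pbg * net_energy Ns Nb Esur Edef S)"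
  using assms
  by (cases "net_energy Ns Nb Esur Edef S \<ge> 0")
     (auto simp: coalition_value_def Let_def min_def intro: mult_right_mono mult_right_mono_neg)

lemma min_mult_superadditive:
  fixes a b x y :: "'a :: linordered_ring"
  shows "min (a * x) (b * x) + min (a * y) (b * y) \<le> min (a * (x + y)) (b * (x + y))"
  by (simp add: distrib_left add_mono)

theorem theorem1:
  fixes N Ns Nb :: "'a set" and Esur Edef :: "'a \<Rightarrow> real" and psg pbg :: real
    and Na Nc :: "'a set"
  assumes "finite N"
    and "N = Ns \<union> Nb" and "Ns \<inter> Nb = {}"
    and "\<And>n. n \<in> Ns \<Longrightarrow> Esur n \<ge> 0"
    and "\<And>m. m \<in> Nb \<Longrightarrow> Edef m \<ge> 0"
    and "0 \<le> psg" and "psg < pbg"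
    and "Na \<subseteq> N" and "Nc \<subseteq> N" and "Na \<inter> Nc = {}"
  shows "coalition_value psg pbg Ns Nb Esur Edef (Na \<union> Nc)
           \<ge> coalition_value psg pbg Ns Nb Esur Edef Na + coalition_value psg pbg Ns Nb Esur Edef Nc"
proof -
  have "finite Na" "finite Nc"
    using \<open>finite N\<close> \<open>Na \<subseteq> N\<close> \<open>Nc \<subseteq> N\<close> finite_subset by auto
  then have additive: "net_energy Ns Nb Esur Edef (Na \<union> Nc)
               = net_energy Ns Nb Esur Edef Na + net_energy Ns Nb Esur Edef Nc"
    using \<open>Na \<inter> Nc = {}\<close> by (rule net_energy_Un_disjoint)
  have prices: "psg \<le> pbg"
    using \<open>psg < pbg\<close> by simp
  show ?thesis
    unfolding coalition_value_eq_min[OF prices] additive by (rule min_mult_superadditive)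
qed

end
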